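(* Under the standing setup below (in particular, with $\mathcal C\subseteq\mathcal C_G$ a closed convex cone and $\mathcal S\subseteq\mathcal S_G$ a closed convex set satisfying $\overline{\mathcal T}=\{\Phi\in\mathcal C:\sum_{m}\Phi_m\in\mathcal S\}$), the optimal value of Problem (P) coincides with the optimal value of Problem (D), i.e. $$\sup_{\Phi\in\mathsf P}P(\Phi)=\inf_{(\chi,q)\in\mathsf D}D_{\mathcal S}(\chi,q).$$
   Context: Standing setup. All Hilbert spaces are finite-dimensional complex. Fix an integer $T\ge1$ and systems $\mathcal V_1,\dots,\mathcal V_T,\mathcal W_1,\dots,\mathcal W_T$; set $\mathcal W_0:=\mathbb C$ and $\tilde{\mathcal V}:=\mathcal W_T\otimes\mathcal V_T\otimes\cdots\otimes\mathcal W_1\otimes\mathcal V_1$. For a system $\mathcal X$, $N_{\mathcal X}$ is its dimension, $I_{\mathcal X}$ its identity, $\mathrm{Her}_{\mathcal X}$ the real Hilbert space of Hermitian operators on $\mathcal X$ with inner product $\langle X,Y\rangle=\mathrm{Tr}(XY)$, and $\mathrm{Pos}_{\mathcal X}$ the set of positive semidefinite operators; $X\ge Y$ means $X-Y$ is positive semidefinite; $\mathrm{Tr}_{\mathcal X}$ is the partial trace over $\mathcal X$. For a subset $A$ of a real vector space, $\mathrm{Lin}(A)$ is its real linear span and $\overline A$ its closure. $\mathcal I_n:=\{0,\dots,n-1\}$. Combs: $\mathrm{Chn}_{\tilde{\mathcal V}}$ is the set of $c\in\mathrm{Pos}_{\tilde{\mathcal V}}$ for which there exist $c_t\in\mathrm{Pos}_{\mathcal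 W_t\otimes\mathcal V_t\otimes\cdots\otimes\mathcal W_1\otimes\mathcal V_1}$ ($t=1,\dots,T$) with $c_T=c$, $\mathrm{Tr}_{\mathcal W_t}c_t=I_{\mathcal V_t}\otimes c_{t-1}$ for $2\le t\le T$, and $\mathrm{Tr}_{\mathcal W_1}c_1=I_{\mathcal V_1}$. $\mathcal S_G$ is the set of operators $I_{\mathcal W_T}\otimes\tau_T$ where $\tau_t\in\mathrm{Pos}_{\mathcal V_t\otimes\mathcal W_{t-1}\otimes\mathcal V_{t-1}\otimes\cdots\otimes\mathcal W_1\otimes\mathcal V_1}$ ($t=1,\dots,T$) satisfy $\mathrm{Tr}\,\tau_1=1$ and $\mathrm{Tr}_{\mathcal V_t}\tau_t=I_{\mathcal W_{t-1}}\otimes\tau_{t-1}$ for $2\le t\le T$. Fix an integer $M\ge2$; $\mathcal C_G:=\mathrm{Pos}_{\tilde{\mathcal V}}^M$ and the set of (all) testers is $\mathcal T_G:=\{\Phi=\{\Phi_m\}_{m=0}^{M-1}\in\mathcal C_G:\sum_m\Phi_m\in\mathcal S_G\}$. Problem data: an integer $J\ge0$, $c_m,a_{j,m}\in\mathrm{Her}_{\tilde{\mathcal V}}$ and $b_j\in\mathbb R$ ($m\in\mathcal I_M$, $j\in\mathcal I_J$); $\eta_j(\Phi):=\sum_m\langle\Phi_m,a_{j,m}\rangle-b_j$ and $P(\Phi):=\sum_m\langle\Phi_m,c_m\rangle$. $\mathcal T$ is a nonempty convex subset of $\mathcal T_G$, $\mathsf P:=\{\Phi\in\mathcal T:\eta_j(\Phi)\le0\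 \forall j\in\mathcal I_J\}$, and it is assumed that $\overline{\mathsf P}=\{\Phi\in\overline{\mathcal T}:\eta_j(\Phi)\le0\ \forall j\}$. $\mathcal C\subseteq\mathcal C_G$ is a closed convex cone and $\mathcal S\subseteq\mathcal S_G$ a closed convex set with $\overline{\mathcal T}=\{\Phi\in\mathcal C:\sum_m\Phi_m\in\mathcal S\}$. Problem (P): maximize $P(\Phi)$ subject to $\Phi\in\mathsf P$; its optimal value is $\sup_{\Phi\in\mathsf P}P(\Phi)$ ($-\infty$ if $\mathsf P=\emptyset$); an optimal solution is a $\Phi\in\mathsf P$ attaining it. Dual: $\mathcal C^*:=\{\{y_m\}_{m}\in\mathrm{Her}_{\tilde{\mathcal V}}^M:\sum_m\langle\Phi_m,y_m\rangle\ge0\ \forall\Phi\in\mathcal C\}$; $\lambda_{\mathcal S}(\chi):=\sup_{\varphi\in\mathcal S}\langle\varphi,\chi\rangle$; $z_m(q):=c_m-\sum_jq_ja_{j,m}$ for $q=\{q_j\}\in\mathbb R_+^J$; $\mathsf D:=\{(\chi,q)\in\mathrm{Her}_{\tilde{\mathcal V}}\times\mathbb R_+^J:\{\chi-z_m(q)\}_{m}\in\mathcal C^*\}$; $D_{\mathcal S}(\chi,q):=\lambda_{\mathcal S}(\chi)+\sum_jq_jb_j$. Problem (D): minimize $D_{\mathcal S}(\chi,q)$ over $(\chi,q)\in\mathsf D$; its optimal value is the infimum ($+\infty$ if $\mathsf D=\emptyset$); an optimal solution attains it. *)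

theory Defs
  imports "HOL-Analysis.Analysis"
begin

text \<open>Operators on an N-dimensional system are represented as matrices
  nat \<Rightarrow> nat \<Rightarrow> complex, required to vanish outside {..<N} x {..<N}.
  A tensor product X \<otimes> Y (dims d, n) uses the index i*n + j.
  Families {Phi_m}_{m<M} are functions nat \<Rightarrow> op vanishing for m \<ge> M.
  Topology: product topology on functions (which on these finite-support
  subspaces is the Euclidean one).\<close>

type_synonym op = "nat \<Rightarrow> nat \<Rightarrow> complex"

definition supported :: "nat \<Rightarrow> op \<Rightarrow> bool" where
  "supported N A \<longleftrightarrow> (\<forall>i j. (N \<le> i \<or> N \<le> j) \<longrightarrow> A i j = 0)"

definition herm :: "nat \<Rightarrow> op \<Rightarrow> bool" where
  "herm N A \<longleftrightarrow> supported N A \<and> (\<forall>i j. A j i = cnj (A i j))"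

definition psd :: "nat \<Rightarrow> op \<Rightarrow> bool" where
  "psd N A \<longleftrightarrow> herm N A \<and>
     (\<forall>x :: nat \<Rightarrow> complex. 0 \<le> Re (\<Sum>i<N. \<Sum>j<N. cnj (x i) * A i j * x j))"

definition ident :: "nat \<Rightarrow> op" where
  "ident N = (\<lambda>i j. if i < N \<and> i = j then 1 else 0)"

definition trace :: "nat \<Rightarrow> op \<Rightarrow> complex" where
  "trace N A = (\<Sum>i<N. A i i)"

text \<open>Hilbert-Schmidt inner product Tr(XY) (real for Hermitian X, Y).\<close>
definition hs_inner :: "nat \<Rightarrow> op \<Rightarrow> op \<Rightarrow> real" where
  "hs_inner N X Y = Re (\<Sum>i<N. \<Sum>j<N. X i j * Y j i)"

text \<open>Partial trace over the leftmost factor X (dim d) of X \<otimes> Y (dim n).\<close>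
definition ptrace_left :: "nat \<Rightarrow> nat \<Rightarrow> op \<Rightarrow> op" where
  "ptrace_left d n A = (\<lambda>j j'. if j < n \<and> j' < n then (\<Sum>i<d. A (i*n + j) (i*n + j')) else 0)"

text \<open>I_X \<otimes> B, for X of dim d and B on a system of dim n.\<close>
definition kron_id_left :: "nat \<Rightarrow> nat \<Rightarrow> op \<Rightarrow> op" where
  "kron_id_left d n B = (\<lambda>k k'. if k < d*n \<and> k' < d*n \<and> k div n = k' div n
       then B (k mod n) (k' mod n) else 0)"

text \<open>Dimensions: v t = N_{V_t}, w t = N_{W_t} (t = 1..T).
  dimH t = dim (W_t \<otimes> V_t \<otimes> ... \<otimes> W_1 \<otimes> V_1), dimH 0 = 1 (W_0 = C);
  dimK t = dim (V_t \<otimes> W_{t-1} \<otimes> ... \<otimes> V_1) = v t * dimH (t-1).\<close>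
fun dimH :: "(nat \<Rightarrow> nat) \<Rightarrow> (nat \<Rightarrow> nat) \<Rightarrow> nat \<Rightarrow> nat" where
  "dimH v w 0 = 1"
| "dimH v w (Suc t) = w (Suc t) * (v (Suc t) * dimH v w t)"

definition dimK :: "(nat \<Rightarrow> nat) \<Rightarrow> (nat \<Rightarrow> nat) \<Rightarrow> nat \<Rightarrow> nat" where
  "dimK v w t = v t * dimH v w (t - 1)"

definition S_G :: "nat \<Rightarrow> (nat \<Rightarrow> nat) \<Rightarrow> (nat \<Rightarrow> nat) \<Rightarrow> op set" where
  "S_G T v w = {kron_id_left (w T) (dimK v w T) (\<tau> T) | \<tau>.
      (\<forall>t\<in>{1..T}. psd (dimK v w t) (\<tau> t)) \<and>
      trace (dimK v w 1) (\<tau> 1) = 1 \<and>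
      (\<forall>t\<in>{2..T}. ptrace_left (v t) (dimH v w (t - 1)) (\<tau> t)
                    = kron_id_left (w (t - 1)) (dimK v w (t - 1)) (\<tau> (t - 1)))}"

definition famsupp :: "nat \<Rightarrow> (nat \<Rightarrow> op) \<Rightarrow> bool" where
  "famsupp M \<Phi> \<longleftrightarrow> (\<forall>m\<ge>M. \<Phi> m = (\<lambda>i j. 0))"

definition Her_fam :: "nat \<Rightarrow> nat \<Rightarrow> (nat \<Rightarrow> op) set" where
  "Her_fam N M = {\<Phi>. famsupp M \<Phi> \<and> (\<forall>m<M. herm N (\<Phi> m))}"

definition C_G :: "nat \<Rightarrow> nat \<Rightarrow> (nat \<Rightarrow> op) set" where
  "C_G N M = {\<Phi>. famsupp M \<Phi> \<and> (\<forall>m<M. psd N (\<Phi> m))}"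

definition fam_sum :: "nat \<Rightarrow> (nat \<Rightarrow> op) \<Rightarrow> op" where
  "fam_sum M \<Phi> = (\<lambda>i j. \<Sum>m<M. \<Phi> m i j)"

definition T_G :: "nat \<Rightarrow> (nat \<Rightarrow> nat) \<Rightarrow> (nat \<Rightarrow> nat) \<Rightarrow> nat \<Rightarrow> (nat \<Rightarrow> op) set" where
  "T_G T v w M = {\<Phi> \<in> C_G (dimH v w T) M. fam_sum M \<Phi> \<in> S_G T v w}"

definition fam_inner :: "nat \<Rightarrow> nat \<Rightarrow> (nat \<Rightarrow> op) \<Rightarrow> (nat \<Rightarrow> op) \<Rightarrow> real" where
  "fam_inner N M \<Phi> Y = (\<Sum>m<M. hs_inner N (\<Phi> m) (Y m))"

definition convex_ops :: "op set \<Rightarrow> bool" where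
  "convex_ops A \<longleftrightarrow> (\<forall>x\<in>A. \<forall>y\<in>A. \<forall>u::real. 0 \<le> u \<and> u \<le> 1 \<longrightarrow>
      (\<lambda>i j. of_real u * x i j + of_real (1 - u) * y i j) \<in> A)"

definition convex_fams :: "(nat \<Rightarrow> op) set \<Rightarrow> bool" where
  "convex_fams A \<longleftrightarrow> (\<forall>x\<in>A. \<forall>y\<in>A. \<forall>u::real. 0 \<le> u \<and> u \<le> 1 \<longrightarrow>
      (\<lambda>m i j. of_real u * x m i j + of_real (1 - u) * y m i j) \<in> A)"

definition convex_cone_fams :: "(nat \<Rightarrow> op) set \<Rightarrow> bool" where
  "convex_cone_fams A \<longleftrightarrow> convex_fams A \<and>
     (\<forall>x\<in>A. \<forall>r::real. 0 \<le> r \<longrightarrow> (\<lambda>m i j. of_real r * x m i j) \<in> A)"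

definition dual_cone :: "nat \<Rightarrow> nat \<Rightarrow> (nat \<Rightarrow> op) set \<Rightarrow> (nat \<Rightarrow> op) set" where
  "dual_cone N M C = {y \<in> Her_fam N M. \<forall>\<Phi>\<in>C. 0 \<le> fam_inner N M \<Phi> y}"

end

theory Submission
  imports Defs
begin

(* Every element of S_G has trace c0 = N_W1 * ... * N_WT and bounded entries, so the
   normalised slice K = {Phi in C. Tr (Sum_m Phi_m) = c0} of the primal cone and S are compact
   convex sets, and every primal feasible point lies in K.  If r exceeds the primal value, no
   (Phi, phi) in K x S satisfies Sum_m Phi_m = phi, eta_j(Phi) <= 0 and P(Phi) >= r, so the penalty
     |Sum_m Phi_m - phi|^2 + Sum_j max(0, eta_j(Phi))^2 + max(0, r - P(Phi))^2
   has a positive minimum on K x S.  The first-order optimality condition at a minimiser is a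
   separating inequality; its multipliers (the residual Sum_m Phi_m - phi and the two positive
   parts), suitably rescaled and shifted by a multiple of the identity, form a dual feasible point
   of value at most r.  Together with weak duality this gives equality of the optimal values. *)

section \<open>Hermitian and positive semidefinite matrices\<close>

lemma quadratic_form_restrict:
  fixes x :: "nat \<Rightarrow> complex"
  assumes "S \<subseteq> {..<N}" and "\<And>k. k \<notin> S \<Longrightarrow> x k = 0"
  shows "(\<Sum>k<N. \<Sum>l<N. cnj (x k) * A k l * x l) = (\<Sum>k\<in>S. \<Sum>l\<in>S. cnj (x k) * A k l * x l)"
proof -
  have inner: "(\<Sum>l<N. g l * x l) = (\<Sum>l\<in>S. g l * x l)" for g :: "nat \<Rightarrow> complex"
    by (rule sum.mono_neutral_right) (use assms in auto)
  have "(\<Sum>k<N. \<Sum>l<N. cnj (x k) * A k l * x l) = (\<Sum>k\<in>S. \<Sum>l<N. cnj (x k) * A k l * x l)"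
    by (rule sum.mono_neutral_right) (use assms in auto)
  then show ?thesis by (simp add: inner)
qed

lemma psd_quadratic_form_nonneg:
  "psd N A \<Longrightarrow> 0 \<le> Re (\<Sum>k<N. \<Sum>l<N. cnj (x k) * A k l * x l)"
  unfolding psd_def by blast

lemma psd_imp_herm: "psd N A \<Longrightarrow> herm N A"
  by (simp add: psd_def)

lemma hermI: "supported N A \<Longrightarrow> (\<And>i j. A j i = cnj (A i j)) \<Longrightarrow> herm N A"
  unfolding herm_def by blast

lemma herm_cnj: "herm N A \<Longrightarrow> A j i = cnj (A i j)"
  unfolding herm_def by blast

lemma herm_imp_supported: "herm N A \<Longrightarrow> supported N A"
  by (simp add: herm_def)

lemma herm_diag_real: "herm N A \<Longrightarrow> A i i = of_real (Re (A i i))"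
  using herm_cnj[of N A i i] by (metis Reals_cnj_iff complex_is_Real_iff of_real_Re)

lemma herm_diff:
  assumes "herm N X" "herm N Y"
  shows "herm N (\<lambda>i k. X i k - Y i k)"
proof (rule hermI)
  show "supported N (\<lambda>i k. X i k - Y i k)"
    using herm_imp_supported[OF assms(1)] herm_imp_supported[OF assms(2)]
    unfolding supported_def by simp
  show "X k i - Y k i = cnj (X i k - Y i k)" for i k
    using herm_cnj[OF assms(1), of k i] herm_cnj[OF assms(2), of k i] by simp
qed

lemma herm_scale:
  assumes "herm N X"
  shows "herm N (\<lambda>i k. of_real t * X i k)"
proof (rule hermI)
  show "supported N (\<lambda>i k. of_real t * X i k)"
    using herm_imp_supported[OF assms] unfolding supported_def by simp
  show "of_real t * X k i = cnj (of_real t * X i k)" for i k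
    using herm_cnj[OF assms, of k i] by simp
qed

lemma herm_sum:
  assumes "\<And>j. j \<in> A \<Longrightarrow> herm N (X j)"
  shows "herm N (\<lambda>i k. \<Sum>j\<in>A. X j i k)"
proof (rule hermI)
  show "supported N (\<lambda>i k. \<Sum>j\<in>A. X j i k)"
    using herm_imp_supported[OF assms] unfolding supported_def by simp
  show "(\<Sum>j\<in>A. X j k i) = cnj (\<Sum>j\<in>A. X j i k)" for i k
    using herm_cnj[OF assms, of _ k i] by (simp add: cnj_sum)
qed

lemma herm_ident: "herm N (ident N)"
  unfolding herm_def supported_def ident_def by simp

lemma psd_diag_nonneg:
  assumes "psd N A" "i < N"
  shows "0 \<le> Re (A i i)"
proof -
  define x :: "nat \<Rightarrow> complex" where "x = (\<lambda>k. if k = i then 1 else 0)"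
  have "(\<Sum>k<N. \<Sum>l<N. cnj (x k) * A k l * x l) = A i i"
    using quadratic_form_restrict[of "{i}" N x A] assms(2) by (simp add: x_def)
  then show ?thesis using psd_quadratic_form_nonneg[OF assms(1), of x] by simp
qed

lemma cnj_sgn_mult: "cnj (sgn b) * b = of_real (cmod b)"
proof (cases "b = 0")
  case False
  have "cnj (sgn b) * b = cnj b * b / of_real (cmod b)"
    by (simp add: sgn_div_norm divide_inverse scaleR_conv_of_real)
  also have "cnj b * b = of_real ((cmod b)^2)"
    using complex_norm_square[of b] by (simp add: mult.commute)
  finally show ?thesis using False by (simp add: power2_eq_square)
qed simp

lemma psd_offdiag_bound:
  assumes "psd N A" "i < N" "j < N" "i \<noteq> j"
  shows "2 * cmod (A i j) \<le> Re (A i i) + Re (A j j)"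
proof -
  define b where "b = A i j"
  have A_ji: "A j i = cnj b"
    unfolding b_def by (rule herm_cnj[OF psd_imp_herm[OF assms(1)]])
  define x :: "nat \<Rightarrow> complex" where "x = (\<lambda>k. if k = i then - sgn b else if k = j then 1 else 0)"
  have "cnj b * sgn b = cnj (cnj (sgn b) * b)"
    by (simp add: mult.commute)
  then have cross: "cnj (sgn b) * b = of_real (cmod b)" "cnj b * sgn b = of_real (cmod b)"
    by (simp_all only: cnj_sgn_mult complex_cnj_complex_of_real)
  have sgn_sq: "cnj (sgn b) * sgn b = of_real ((cmod (sgn b))^2)"
    using complex_norm_square[of "sgn b"] by (simp add: mult.commute)
  have "(\<Sum>k<N. \<Sum>l<N. cnj (x k) * A k l * x l)
      = A i i * (cnj (sgn b) * sgn b) - cnj (sgn b) * b - cnj b * sgn b + A j j"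
    using quadratic_form_restrict[of "{i, j}" N x A] assms(2-4)
    by (simp add: x_def b_def A_ji algebra_simps)
  then have qf: "Re (\<Sum>k<N. \<Sum>l<N. cnj (x k) * A k l * x l)
      = Re (A i i) * (cmod (sgn b))^2 - 2 * cmod b + Re (A j j)"
    unfolding cross sgn_sq by simp
  have "(cmod (sgn b))^2 \<le> 1"
    by (cases "b = 0") (simp_all add: norm_sgn)
  then have "Re (A i i) * (cmod (sgn b))^2 \<le> Re (A i i)"
    using psd_diag_nonneg[OF assms(1,2)] by (simp add: mult_left_le)
  then show ?thesis
    using psd_quadratic_form_nonneg[OF assms(1), of x] qf by (simp add: b_def)
qed

lemma Re_trace: "Re (trace N A) = (\<Sum>k<N. Re (A k k))"
  by (simp add: trace_def)

lemma psd_trace_nonneg: "psd N A \<Longrightarrow> 0 \<le> Re (trace N A)"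
  unfolding Re_trace by (rule sum_nonneg) (use psd_diag_nonneg in auto)

lemma psd_diag_sum_le_trace:
  assumes "psd N A" "I \<subseteq> {..<N}"
  shows "(\<Sum>k\<in>I. Re (A k k)) \<le> Re (trace N A)"
  unfolding Re_trace by (rule sum_mono2) (use assms psd_diag_nonneg in auto)

lemma psd_entry_le_trace:
  assumes "psd N A"
  shows "cmod (A i j) \<le> Re (trace N A)"
proof (cases "i < N \<and> j < N")
  case False
  then have "A i j = 0"
    using herm_imp_supported[OF psd_imp_herm[OF assms]] unfolding supported_def by auto
  then show ?thesis using psd_trace_nonneg[OF assms] by simp
next
  case True
  show ?thesis
  proof (cases "i = j")
    case diagonal: True
    have "cmod (A i i) = Re (A i i)"
      using herm_diag_real[OF psd_imp_herm[OF assms], of i] psd_diag_nonneg[OF assms, of i] True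
      by (metis norm_of_real abs_of_nonneg)
    then show ?thesis using psd_diag_sum_le_trace[OF assms, of "{i}"] True diagonal by simp
  next
    case False
    then have "Re (A i i) + Re (A j j) \<le> Re (trace N A)"
      using psd_diag_sum_le_trace[OF assms, of "{i, j}"] True by simp
    then show ?thesis
      using psd_offdiag_bound[OF assms, of i j] True False norm_ge_zero[of "A i j"] by linarith
  qed
qed

section \<open>Tensor products and the set S_G\<close>

lemma sum_lessThan_mult:
  fixes d n :: nat
  shows "(\<Sum>k<d * n. g k) = (\<Sum>i<d. \<Sum>j<n. g (i * n + j))"
proof -
  have "sum g {i * n..<i * n + n} = (\<Sum>j<n. g (i * n + j))" for i
    using sum.shift_bounds_nat_ivl[of g 0 "i * n" n] by (simp add: atLeast0LessThan add.commute)
  then show ?thesis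
    using sum.nat_group[of g n d] by (simp add: mult.commute)
qed

lemma trace_kron_id_left: "trace (d * n) (kron_id_left d n B) = of_nat d * trace n B"
proof -
  have "kron_id_left d n B (i * n + j) (i * n + j) = B j j" if "i < d" "j < n" for i j
  proof -
    have "i * n + j < Suc i * n" using that by simp
    also have "\<dots> \<le> d * n" using that by (intro mult_le_mono1) simp
    finally have "i * n + j < d * n" .
    then show ?thesis using that by (simp add: kron_id_left_def)
  qed
  then show ?thesis
    by (simp add: trace_def sum_lessThan_mult)
qed

lemma trace_ptrace_left: "trace n (ptrace_left d n A) = trace (d * n) A"
  by (simp add: trace_def ptrace_left_def sum_lessThan_mult sum.swap[of _ "{..<n}"])

lemma kron_id_left_entry:
  "kron_id_left d n B i j = 0 \<or> kron_id_left d n B i j = B (i mod n) (j mod n)"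
  by (simp add: kron_id_left_def)

lemma herm_kron_id_left:
  assumes "herm n B"
  shows "herm (d * n) (kron_id_left d n B)"
proof (rule hermI)
  show "supported (d * n) (kron_id_left d n B)"
    unfolding supported_def kron_id_left_def by simp
  fix i j
  have B_ji: "B (j mod n) (i mod n) = cnj (B (i mod n) (j mod n))"
    by (rule herm_cnj[OF assms])
  show "kron_id_left d n B j i = cnj (kron_id_left d n B i j)"
  proof (cases "i < d * n \<and> j < d * n \<and> i div n = j div n")
    case True
    then show ?thesis unfolding kron_id_left_def using B_ji by simp
  next
    case False
    then have "\<not> (j < d * n \<and> i < d * n \<and> j div n = i div n)" by auto
    then show ?thesis unfolding kron_id_left_def using False by (simp only: if_False) simp
  qed
qed

lemma trace_tester_chain:
  assumes "t \<in> {1..T}"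
    and trace_1: "trace (dimK v w 1) (\<tau> 1) = 1"
    and chain: "\<forall>t\<in>{2..T}. ptrace_left (v t) (dimH v w (t - 1)) (\<tau> t)
                    = kron_id_left (w (t - 1)) (dimK v w (t - 1)) (\<tau> (t - 1))"
  shows "trace (dimK v w t) (\<tau> t) = of_nat (\<Prod>s\<in>{1..<t}. w s)"
  using assms(1)
proof (induction t)
  case (Suc s)
  show ?case
  proof (cases "s = 0")
    case True
    then show ?thesis using trace_1 by simp
  next
    case False
    then obtain s' where s': "s = Suc s'" by (cases s) auto
    have "ptrace_left (v (Suc s)) (dimH v w s) (\<tau> (Suc s)) = kron_id_left (w s) (dimK v w s) (\<tau> s)"
    proof -
      have "Suc s \<in> {2..T}" using Suc.prems False by auto
      then show ?thesis using chain by (metis diff_Suc_1)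
    qed
    then have "trace (dimK v w (Suc s)) (\<tau> (Suc s)) = trace (w s * dimK v w s) (kron_id_left (w s) (dimK v w s) (\<tau> s))"
      using trace_ptrace_left[of "dimH v w s" "v (Suc s)" "\<tau> (Suc s)"] s' by (simp add: dimK_def)
    also have "\<dots> = of_nat (w s) * of_nat (\<Prod>s\<in>{1..<s}. w s)"
      using Suc False by (simp add: trace_kron_id_left)
    also have "\<dots> = of_nat (\<Prod>s\<in>{1..<Suc s}. w s)"
      using False by (simp add: prod.atLeastLessThan_Suc mult.commute)
    finally show ?thesis .
  qed
qed simp

lemma S_G_trace_herm_bounded:
  assumes "\<phi> \<in> S_G T v w" "1 \<le> T"
  shows "trace (dimH v w T) \<phi> = of_nat (\<Prod>t\<in>{1..T}. w t)"
    and "herm (dimH v w T) \<phi>"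
    and "cmod (\<phi> i j) \<le> real (\<Prod>t\<in>{1..<T}. w t)"
proof -
  obtain \<tau> where \<phi>: "\<phi> = kron_id_left (w T) (dimK v w T) (\<tau> T)"
    and psd_\<tau>: "\<forall>t\<in>{1..T}. psd (dimK v w t) (\<tau> t)"
    and trace_1: "trace (dimK v w 1) (\<tau> 1) = 1"
    and chain: "\<forall>t\<in>{2..T}. ptrace_left (v t) (dimH v w (t - 1)) (\<tau> t)
                    = kron_id_left (w (t - 1)) (dimK v w (t - 1)) (\<tau> (t - 1))"
    using assms(1) unfolding S_G_def by blast
  have trace_T: "trace (dimK v w T) (\<tau> T) = of_nat (\<Prod>t\<in>{1..<T}. w t)"
    using trace_tester_chain[OF _ trace_1 chain] assms(2) by simp
  have psd_T: "psd (dimK v w T) (\<tau> T)"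
    using psd_\<tau> assms(2) by simp
  have dim: "dimH v w T = w T * dimK v w T"
    using assms(2) by (cases T) (simp_all add: dimK_def)
  show "trace (dimH v w T) \<phi> = of_nat (\<Prod>t\<in>{1..T}. w t)"
    using assms(2) by (simp add: \<phi> dim trace_kron_id_left trace_T prod.atLeastLessThan_Suc
        atLeastLessThanSuc_atLeastAtMost[symmetric] mult.commute del: of_nat_prod)
  show "herm (dimH v w T) \<phi>"
    unfolding \<phi> dim by (rule herm_kron_id_left[OF psd_imp_herm[OF psd_T]])
  have "cmod (\<phi> i j) \<le> Re (trace (dimK v w T) (\<tau> T))"
    using kron_id_left_entry[of "w T" "dimK v w T" "\<tau> T" i j] psd_entry_le_trace[OF psd_T]
      psd_trace_nonneg[OF psd_T] \<phi> by auto
  then show "cmod (\<phi> i j) \<le> real (\<Prod>t\<in>{1..<T}. w t)"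
    by (simp add: trace_T del: of_nat_prod)
qed

section \<open>The Hilbert-Schmidt inner product on operators and families\<close>

lemma hs_inner_diff_left: "hs_inner N (\<lambda>i k. X i k - Y i k) Z = hs_inner N X Z - hs_inner N Y Z"
  unfolding hs_inner_def by (simp add: algebra_simps sum_subtractf)

lemma hs_inner_diff_right: "hs_inner N Z (\<lambda>i k. X i k - Y i k) = hs_inner N Z X - hs_inner N Z Y"
  unfolding hs_inner_def by (simp add: algebra_simps sum_subtractf)

lemma hs_inner_scale_left: "hs_inner N (\<lambda>i k. of_real t * X i k) Y = t * hs_inner N X Y"
  unfolding hs_inner_def by (simp add: sum_distrib_left algebra_simps)

lemma hs_inner_scale_right: "hs_inner N X (\<lambda>i k. of_real t * Y i k) = t * hs_inner N X Y"
  unfolding hs_inner_def by (simp add: sum_distrib_left algebra_simps)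

lemma hs_inner_segment_left:
  "hs_inner N (\<lambda>i k. A i k + of_real s * (B i k - A i k)) Y
     = hs_inner N A Y + s * (hs_inner N B Y - hs_inner N A Y)"
  unfolding hs_inner_def
  by (simp add: sum_distrib_left algebra_simps sum.distrib sum_subtractf)

lemma hs_inner_sum_right: "hs_inner N X (\<lambda>i k. \<Sum>j\<in>A. Y j i k) = (\<Sum>j\<in>A. hs_inner N X (Y j))"
  unfolding hs_inner_def by (simp add: sum_distrib_left sum.swap[of _ A] Re_sum)

lemma hs_inner_fam_sum_left: "hs_inner N (fam_sum M \<Phi>) Z = (\<Sum>m<M. hs_inner N (\<Phi> m) Z)"
  unfolding hs_inner_def fam_sum_def
  by (simp add: sum_distrib_right sum.swap[of _ "{..<M}"] Re_sum)

lemma hs_inner_ident_right: "hs_inner N X (ident N) = Re (trace N X)"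
proof -
  have "(\<Sum>j<N. X i j * ident N j i) = X i i" if "i < N" for i
  proof -
    have "(\<Sum>j<N. X i j * ident N j i) = (\<Sum>j\<in>{i}. X i j * ident N j i)"
      by (rule sum.mono_neutral_right) (use that in \<open>auto simp: ident_def\<close>)
    then show ?thesis using that by (simp add: ident_def)
  qed
  then show ?thesis unfolding hs_inner_def trace_def by simp
qed

lemma hs_inner_herm_right:
  assumes "herm N Y"
  shows "hs_inner N X Y = (\<Sum>i<N. \<Sum>k<N. Re (cnj (Y i k) * X i k))"
proof -
  have "X i k * Y k i = cnj (Y i k) * X i k" for i k
    using herm_cnj[OF assms, of k i] by (simp add: mult.commute)
  then have "(\<Sum>i<N. \<Sum>k<N. X i k * Y k i) = (\<Sum>i<N. \<Sum>k<N. cnj (Y i k) * X i k)"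
    by (simp only:)
  then show ?thesis unfolding hs_inner_def by (simp only: Re_sum)
qed

lemma hs_inner_self:
  assumes "herm N Y"
  shows "hs_inner N Y Y = (\<Sum>i<N. \<Sum>k<N. (cmod (Y i k))^2)"
  unfolding hs_inner_herm_right[OF assms]
  by (simp add: complex_norm_square[symmetric] mult.commute del: of_real_power)

lemma fam_inner_scale_left: "fam_inner N M (\<lambda>m i k. of_real t * \<Phi> m i k) Y = t * fam_inner N M \<Phi> Y"
  unfolding fam_inner_def by (simp add: hs_inner_scale_left sum_distrib_left)

lemma fam_inner_segment_left:
  "fam_inner N M (\<lambda>m i k. A m i k + of_real s * (B m i k - A m i k)) Y
     = fam_inner N M A Y + s * (fam_inner N M B Y - fam_inner N M A Y)"
  unfolding fam_inner_def hs_inner_segment_left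
  by (simp add: sum.distrib sum_subtractf sum_distrib_left[symmetric])

lemma fam_inner_vanishing: "(\<And>m i k. m < M \<Longrightarrow> \<Phi> m i k = 0) \<Longrightarrow> fam_inner N M \<Phi> Y = 0"
  unfolding fam_inner_def hs_inner_def by simp

lemma Re_trace_fam_sum: "Re (trace N (fam_sum M \<Phi>)) = (\<Sum>m<M. Re (trace N (\<Phi> m)))"
  unfolding trace_def fam_sum_def by (simp add: sum.swap[of _ "{..<N}"])

lemma Re_trace_fam_sum_eq_fam_inner: "Re (trace N (fam_sum M \<Phi>)) = fam_inner N M \<Phi> (\<lambda>m. ident N)"
  by (simp add: hs_inner_ident_right[symmetric] hs_inner_fam_sum_left fam_inner_def)

lemma fam_inner_shifted_right:
  "fam_inner N M \<Phi> (\<lambda>m. if m < M then (\<lambda>i k. chi i k - Z m i k) else (\<lambda>i k. 0))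
     = hs_inner N (fam_sum M \<Phi>) chi - fam_inner N M \<Phi> Z"
  unfolding fam_inner_def
  by (simp add: hs_inner_diff_right hs_inner_fam_sum_left sum_subtractf)

lemma fam_inner_combination_right:
  "fam_inner N M \<Phi> (\<lambda>m i k. c m i k - (\<Sum>j<J. of_real (q j) * a j m i k))
     = fam_inner N M \<Phi> c - (\<Sum>j<J. q j * fam_inner N M \<Phi> (a j))"
  unfolding fam_inner_def
  by (simp add: hs_inner_diff_right hs_inner_sum_right hs_inner_scale_right sum_subtractf
      sum_distrib_left sum.swap[of _ "{..<M}"])

lemma C_G_psd: "\<Phi> \<in> C_G N M \<Longrightarrow> m < M \<Longrightarrow> psd N (\<Phi> m)"
  unfolding C_G_def by blast

lemma C_G_vanishing: "\<Phi> \<in> C_G N M \<Longrightarrow> M \<le> m \<Longrightarrow> \<Phi> m i k = 0"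
  unfolding C_G_def famsupp_def by auto

lemma C_G_trace_nonneg: "\<Phi> \<in> C_G N M \<Longrightarrow> 0 \<le> Re (trace N (fam_sum M \<Phi>))"
  unfolding Re_trace_fam_sum by (auto intro!: sum_nonneg psd_trace_nonneg C_G_psd)

lemma C_G_entry_le_trace:
  assumes "\<Phi> \<in> C_G N M"
  shows "cmod (\<Phi> m i k) \<le> Re (trace N (fam_sum M \<Phi>))"
proof (cases "m < M")
  case True
  have "Re (trace N (\<Phi> m)) \<le> (\<Sum>m'<M. Re (trace N (\<Phi> m')))"
    by (rule member_le_sum) (use True assms in \<open>auto intro: psd_trace_nonneg C_G_psd\<close>)
  then show ?thesis
    using psd_entry_le_trace[OF C_G_psd[OF assms True], of i k] by (simp add: Re_trace_fam_sum)
next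
  case False
  then show ?thesis using C_G_vanishing[OF assms] C_G_trace_nonneg[OF assms] by simp
qed

lemma herm_fam_sum: "\<Phi> \<in> C_G N M \<Longrightarrow> herm N (fam_sum M \<Phi>)"
  unfolding fam_sum_def by (rule herm_sum) (auto intro: psd_imp_herm C_G_psd)

section \<open>Continuity and compactness\<close>

lemma continuous_on_entry: "continuous_on S f \<Longrightarrow> continuous_on S (\<lambda>x. f x i j)"
  by (rule continuous_on_product_then_coordinatewise,
      rule continuous_on_product_then_coordinatewise)

lemma continuous_on_fam_entry: "continuous_on S f \<Longrightarrow> continuous_on S (\<lambda>x. f x m i j)"
  by (rule continuous_on_entry, rule continuous_on_product_then_coordinatewise)

lemma continuous_on_fam_inner:
  "continuous_on S f \<Longrightarrow> continuous_on S (\<lambda>x. fam_inner N M (f x) Y)"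
  unfolding fam_inner_def hs_inner_def
  by (intro continuous_on_sum continuous_on_Re continuous_on_mult_right)
    (rule continuous_on_fam_entry)

lemma compact_PiE_UNIV:
  fixes S :: "'a \<Rightarrow> 'b::topological_space set"
  assumes "\<And>i. compact (S i)"
  shows "compact (PiE UNIV S)"
proof -
  have "compactin (product_topology (\<lambda>i. euclidean) UNIV) (PiE UNIV S)"
    using assms by (simp add: compactin_PiE)
  then show ?thesis by (simp add: euclidean_product_topology)
qed

lemma compact_entry_bounded: "compact {A :: 'a \<Rightarrow> 'b \<Rightarrow> complex. \<forall>i j. cmod (A i j) \<le> R}"
proof -
  have "{A :: 'a \<Rightarrow> 'b \<Rightarrow> complex. \<forall>i j. cmod (A i j) \<le> R}
      = PiE UNIV (\<lambda>_. PiE UNIV (\<lambda>_. cball 0 R))"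
    by (auto simp: PiE_UNIV_domain Pi_iff)
  then show ?thesis by (simp add: compact_PiE_UNIV)
qed

lemma compact_fam_entry_bounded:
  "compact {\<Phi> :: 'c \<Rightarrow> 'a \<Rightarrow> 'b \<Rightarrow> complex. \<forall>m i j. cmod (\<Phi> m i j) \<le> R}"
proof -
  have "{\<Phi> :: 'c \<Rightarrow> 'a \<Rightarrow> 'b \<Rightarrow> complex. \<forall>m i j. cmod (\<Phi> m i j) \<le> R}
      = PiE UNIV (\<lambda>_. {A. \<forall>i j. cmod (A i j) \<le> R})"
    by (auto simp: PiE_UNIV_domain Pi_iff)
  then show ?thesis by (simp add: compact_PiE_UNIV compact_entry_bounded)
qed

section \<open>A quadratic penalty and its first-order condition\<close>

definition penalty :: "nat \<Rightarrow> nat \<Rightarrow> real \<Rightarrow> op \<Rightarrow> (nat \<Rightarrow> real) \<Rightarrow> real \<Rightarrow> real" where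
  "penalty N J r U e p =
     (\<Sum>i<N. \<Sum>k<N. (cmod (U i k))\<^sup>2) + (\<Sum>j<J. (max 0 (e j))\<^sup>2) + (max 0 (r - p))\<^sup>2"

lemma penalty_eq_0_iff:
  "penalty N J r U e p = 0 \<longleftrightarrow> (\<forall>i<N. \<forall>k<N. U i k = 0) \<and> (\<forall>j<J. e j \<le> 0) \<and> r \<le> p"
proof -
  have "(\<Sum>i<N. \<Sum>k<N. (cmod (U i k))\<^sup>2) = 0 \<longleftrightarrow> (\<forall>i<N. \<forall>k<N. U i k = 0)"
    by (auto simp: sum_nonneg_eq_0_iff sum_nonneg)
  moreover have "(\<Sum>j<J. (max 0 (e j))\<^sup>2) = 0 \<longleftrightarrow> (\<forall>j<J. e j \<le> 0)"
  proof -
    have "(max 0 (e j))\<^sup>2 = 0 \<longleftrightarrow> e j \<le> 0" for j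
      by (cases "e j \<le> 0") (simp_all add: max_def)
    then show ?thesis by (simp add: sum_nonneg_eq_0_iff lessThan_iff Ball_def)
  qed
  moreover have "(max 0 (r - p))\<^sup>2 = 0 \<longleftrightarrow> r \<le> p"
    by (simp add: max_def)
  moreover have "0 \<le> (\<Sum>i<N. \<Sum>k<N. (cmod (U i k))\<^sup>2)" "0 \<le> (\<Sum>j<J. (max 0 (e j))\<^sup>2)"
    by (simp_all add: sum_nonneg)
  ultimately show ?thesis
    unfolding penalty_def by (smt (verit) zero_le_power2)
qed

lemma penalty_nonneg: "0 \<le> penalty N J r U e p"
  unfolding penalty_def by (intro add_nonneg_nonneg sum_nonneg) simp_all

lemma max_0_add_sq_le:
  fixes e s d :: real
  shows "(max 0 (e + s * d))\<^sup>2 \<le> (max 0 e)\<^sup>2 + 2 * s * max 0 e * d + s\<^sup>2 * d\<^sup>2"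
proof (cases "0 \<le> e")
  case True
  then have "(max 0 e)\<^sup>2 + 2 * s * max 0 e * d + s\<^sup>2 * d\<^sup>2 = (e + s * d)\<^sup>2"
    by (simp add: power2_eq_square algebra_simps)
  then show ?thesis by (simp add: max_def)
next
  case False
  then have "(max 0 (e + s * d))\<^sup>2 \<le> (s * d)\<^sup>2"
    by (cases "0 \<le> e + s * d") (auto simp: max_def intro!: power_mono)
  then show ?thesis using False by (simp add: power_mult_distrib)
qed

lemma nonneg_if_quadratic_nonneg_near_0:
  fixes G D :: real
  assumes "\<And>s. 0 < s \<Longrightarrow> s \<le> 1 \<Longrightarrow> 0 \<le> 2 * s * G + s\<^sup>2 * D"
  shows "0 \<le> G"
proof (rule ccontr)
  assume "\<not> 0 \<le> G"
  define s where "s = min 1 (- G / (\<bar>D\<bar> + 1))"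
  have s: "0 < s" "s \<le> 1"
    unfolding s_def using \<open>\<not> 0 \<le> G\<close> by (simp_all add: field_simps)
  have "s * (\<bar>D\<bar> + 1) \<le> (- G / (\<bar>D\<bar> + 1)) * (\<bar>D\<bar> + 1)"
    by (rule mult_right_mono) (simp_all add: s_def)
  then have "s * (\<bar>D\<bar> + 1) \<le> - G"
    by (simp add: add_pos_nonneg)
  moreover have "s * D \<le> s * \<bar>D\<bar>"
    using s by (simp add: mult_left_mono)
  moreover have "s * (\<bar>D\<bar> + 1) = s * \<bar>D\<bar> + s"
    by (simp add: distrib_left)
  ultimately have "s * D < - G"
    using s by linarith
  then have "s * (s * D) < s * (- G)"
    using s(1) by (rule mult_strict_left_mono)
  then have "2 * s * G + s\<^sup>2 * D < s * G"
    by (simp add: power2_eq_square algebra_simps)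
  also have "\<dots> < 0"
    using s \<open>\<not> 0 \<le> G\<close> by (simp add: mult_pos_neg)
  finally show False using assms[OF s] by simp
qed

lemma cmod_add_scaled_sq:
  "(cmod (A + of_real s * D))\<^sup>2 = (cmod A)\<^sup>2 + 2 * s * Re (cnj A * D) + s\<^sup>2 * (cmod D)\<^sup>2"
  unfolding cmod_power2 by (simp add: power2_eq_square algebra_simps)

lemma penalty_directional_derivative_nonneg:
  assumes "\<And>s. 0 < s \<Longrightarrow> s \<le> 1 \<Longrightarrow> penalty N J r U e p
      \<le> penalty N J r (\<lambda>i k. U i k + of_real s * dU i k) (\<lambda>j. e j + s * de j) (p + s * dp)"
  shows "0 \<le> (\<Sum>i<N. \<Sum>k<N. Re (cnj (U i k) * dU i k)) + (\<Sum>j<J. max 0 (e j) * de j)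
      - max 0 (r - p) * dp" (is "0 \<le> ?G")
proof (rule nonneg_if_quadratic_nonneg_near_0)
  fix s :: real
  assume s: "0 < s" "s \<le> 1"
  define D where "D = (\<Sum>i<N. \<Sum>k<N. (cmod (dU i k))\<^sup>2) + (\<Sum>j<J. (de j)\<^sup>2) + dp\<^sup>2"
  have U_part: "(\<Sum>i<N. \<Sum>k<N. (cmod (U i k + of_real s * dU i k))\<^sup>2)
      = (\<Sum>i<N. \<Sum>k<N. (cmod (U i k))\<^sup>2) + 2 * s * (\<Sum>i<N. \<Sum>k<N. Re (cnj (U i k) * dU i k))
        + s\<^sup>2 * (\<Sum>i<N. \<Sum>k<N. (cmod (dU i k))\<^sup>2)"
    by (simp only: cmod_add_scaled_sq sum.distrib sum_distrib_left[symmetric])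
  have "(\<Sum>j<J. (max 0 (e j + s * de j))\<^sup>2)
      \<le> (\<Sum>j<J. (max 0 (e j))\<^sup>2 + 2 * s * max 0 (e j) * de j + s\<^sup>2 * (de j)\<^sup>2)"
    by (rule sum_mono) (rule max_0_add_sq_le)
  then have e_part: "(\<Sum>j<J. (max 0 (e j + s * de j))\<^sup>2)
      \<le> (\<Sum>j<J. (max 0 (e j))\<^sup>2) + 2 * s * (\<Sum>j<J. max 0 (e j) * de j) + s\<^sup>2 * (\<Sum>j<J. (de j)\<^sup>2)"
    by (simp add: sum.distrib sum_distrib_left mult.assoc)
  have p_part: "(max 0 (r - (p + s * dp)))\<^sup>2
      \<le> (max 0 (r - p))\<^sup>2 + 2 * s * max 0 (r - p) * (- dp) + s\<^sup>2 * dp\<^sup>2"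
    using max_0_add_sq_le[of "r - p" s "- dp"] by (simp add: algebra_simps)
  have "penalty N J r U e p \<le> penalty N J r U e p + 2 * s * ?G + s\<^sup>2 * D"
    using assms[OF s] U_part e_part p_part
    unfolding penalty_def D_def by (simp add: algebra_simps)
  then show "0 \<le> 2 * s * ?G + s\<^sup>2 * D" by simp
qed

section \<open>Strong duality for normalised conic programs\<close>

lemma exists_multiplier_scaling:
  fixes F \<mu> r B :: real
  assumes F: "0 < F" and \<mu>: "0 \<le> \<mu>" and bound: "\<And>x. x \<in> A \<Longrightarrow> p x \<le> B"
  obtains \<kappa> where "0 \<le> \<kappa>" "\<And>x. x \<in> A \<Longrightarrow> 0 \<le> \<kappa> * F + (\<kappa> * \<mu> - 1) * (p x - r)"
proof (cases "\<mu> = 0")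
  case True
  define \<kappa> where "\<kappa> = max 0 ((B - r) / F)"
  have "B - r \<le> \<kappa> * F"
  proof (cases "(B - r) / F \<le> 0")
    case True
    then show ?thesis using F by (simp add: \<kappa>_def divide_le_0_iff)
  qed (use F in \<open>simp add: \<kappa>_def\<close>)
  then show ?thesis
    using that[of \<kappa>] bound True by (fastforce simp: \<kappa>_def)
next
  case False
  then show ?thesis
    using that[of "1 / \<mu>"] F \<mu> by simp
qed

locale conic_program =
  fixes N M J :: nat and c :: "nat \<Rightarrow> op" and a :: "nat \<Rightarrow> nat \<Rightarrow> op" and b :: "nat \<Rightarrow> real"
    and Cset :: "(nat \<Rightarrow> op) set" and Sset :: "op set" and c0 :: real
  assumes c_herm: "\<And>m. m < M \<Longrightarrow> herm N (c m)"
    and a_herm: "\<And>j m. j < J \<Longrightarrow> m < M \<Longrightarrow> herm N (a j m)"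
    and C_sub: "Cset \<subseteq> C_G N M" and C_closed: "closed Cset" and C_cone: "convex_cone_fams Cset"
    and S_compact: "compact Sset" and S_conv: "convex_ops Sset"
    and S_herm: "\<And>\<phi>. \<phi> \<in> Sset \<Longrightarrow> herm N \<phi>"
    and S_trace: "\<And>\<phi>. \<phi> \<in> Sset \<Longrightarrow> Re (trace N \<phi>) = c0"
    and c0_pos: "0 < c0"
    and feasible: "\<exists>\<Phi>\<in>Cset. fam_sum M \<Phi> \<in> Sset"
begin

definition objective :: "(nat \<Rightarrow> op) \<Rightarrow> real" where
  "objective \<Phi> = fam_inner N M \<Phi> c"

definition constraint :: "nat \<Rightarrow> (nat \<Rightarrow> op) \<Rightarrow> real" where
  "constraint j \<Phi> = fam_inner N M \<Phi> (a j) - b j"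

definition primal_feasible :: "(nat \<Rightarrow> op) \<Rightarrow> bool" where
  "primal_feasible \<Phi> \<longleftrightarrow> \<Phi> \<in> Cset \<and> fam_sum M \<Phi> \<in> Sset \<and> (\<forall>j<J. constraint j \<Phi> \<le> 0)"

definition lagrangian_cost :: "(nat \<Rightarrow> real) \<Rightarrow> nat \<Rightarrow> op" where
  "lagrangian_cost q m = (\<lambda>i k. c m i k - (\<Sum>j<J. of_real (q j) * a j m i k))"

definition dual_slack :: "op \<Rightarrow> (nat \<Rightarrow> real) \<Rightarrow> nat \<Rightarrow> op" where
  "dual_slack chi q = (\<lambda>m. if m < M then (\<lambda>i k. chi i k - lagrangian_cost q m i k) else (\<lambda>i k. 0))"

definition dual_feasible :: "op \<Rightarrow> (nat \<Rightarrow> real) \<Rightarrow> bool" where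
  "dual_feasible chi q \<longleftrightarrow> herm N chi \<and> (\<forall>j<J. 0 \<le> q j) \<and> (\<forall>j\<ge>J. q j = 0)
     \<and> dual_slack chi q \<in> dual_cone N M Cset"

definition dual_value :: "op \<Rightarrow> (nat \<Rightarrow> real) \<Rightarrow> ereal" where
  "dual_value chi q = (SUP \<phi>\<in>Sset. ereal (hs_inner N \<phi> chi)) + ereal (\<Sum>j<J. q j * b j)"

definition slice :: "(nat \<Rightarrow> op) set" where
  "slice = {\<Phi> \<in> Cset. Re (trace N (fam_sum M \<Phi>)) = c0}"

lemma compact_slice: "compact slice"
proof -
  have "closed slice"
    unfolding slice_def Re_trace_fam_sum_eq_fam_inner
    by (rule continuous_closed_preimage_constant[OF continuous_on_fam_inner[OF continuous_on_id] C_closed])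
  moreover have "slice \<subseteq> {\<Phi>. \<forall>m i j. cmod (\<Phi> m i j) \<le> c0}"
    unfolding slice_def using C_G_entry_le_trace C_sub by blast
  ultimately show ?thesis
    using compact_Int_closed[OF compact_fam_entry_bounded, of slice c0] by (simp add: Int_absorb1)
qed

lemma feasible_in_slice: "\<Phi> \<in> Cset \<Longrightarrow> fam_sum M \<Phi> \<in> Sset \<Longrightarrow> \<Phi> \<in> slice"
  unfolding slice_def using S_trace by simp

lemma slice_segment:
  assumes "\<Phi>0 \<in> slice" "\<Phi> \<in> slice" "0 \<le> s" "s \<le> 1"
  shows "(\<lambda>m i k. \<Phi>0 m i k + of_real s * (\<Phi> m i k - \<Phi>0 m i k)) \<in> slice"
proof -
  have "(\<lambda>m i k. of_real s * \<Phi> m i k + of_real (1 - s) * \<Phi>0 m i k) \<in> Cset"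
    using C_cone assms unfolding convex_cone_fams_def convex_fams_def slice_def by blast
  moreover have "(\<lambda>m i k. of_real s * \<Phi> m i k + of_real (1 - s) * \<Phi>0 m i k)
      = (\<lambda>m i k. \<Phi>0 m i k + of_real s * (\<Phi> m i k - \<Phi>0 m i k))"
    by (intro ext) (simp add: algebra_simps)
  ultimately show ?thesis
    using assms(1,2) by (simp add: slice_def Re_trace_fam_sum_eq_fam_inner fam_inner_segment_left)
qed

lemma S_segment:
  assumes "\<phi>0 \<in> Sset" "\<phi> \<in> Sset" "0 \<le> s" "s \<le> 1"
  shows "(\<lambda>i k. \<phi>0 i k + of_real s * (\<phi> i k - \<phi>0 i k)) \<in> Sset"
proof -
  have "(\<lambda>i k. of_real s * \<phi> i k + of_real (1 - s) * \<phi>0 i k) \<in> Sset"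
    using S_conv assms unfolding convex_ops_def by blast
  moreover have "(\<lambda>i k. of_real s * \<phi> i k + of_real (1 - s) * \<phi>0 i k)
      = (\<lambda>i k. \<phi>0 i k + of_real s * (\<phi> i k - \<phi>0 i k))"
    by (intro ext) (simp add: algebra_simps)
  ultimately show ?thesis by simp
qed

definition pair_penalty :: "real \<Rightarrow> (nat \<Rightarrow> op) \<Rightarrow> op \<Rightarrow> real" where
  "pair_penalty r \<Phi> \<phi> =
     penalty N J r (\<lambda>i k. fam_sum M \<Phi> i k - \<phi> i k) (\<lambda>j. constraint j \<Phi>) (objective \<Phi>)"

lemma continuous_on_pair_penalty:
  "continuous_on X (\<lambda>x. pair_penalty r (fst x) (snd x))"
proof -
  have fst: "continuous_on X fst"
    by (rule continuous_on_fst[OF continuous_on_id])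
  have "continuous_on X (\<lambda>x. fst x m i k)" for m i k
    by (rule continuous_on_fam_entry[OF fst])
  moreover have "continuous_on X (\<lambda>x. snd x i k)" for i k
    by (rule continuous_on_entry[OF continuous_on_snd[OF continuous_on_id]])
  ultimately show ?thesis
    unfolding pair_penalty_def penalty_def objective_def constraint_def fam_sum_def
    by (intro continuous_on_add continuous_on_sum continuous_on_power continuous_on_norm
        continuous_on_diff continuous_on_max continuous_on_const continuous_on_fam_inner[OF fst])
qed

lemma fam_sum_eq_if_entries_eq:
  assumes "\<Phi> \<in> Cset" "\<phi> \<in> Sset" "\<forall>i<N. \<forall>k<N. fam_sum M \<Phi> i k - \<phi> i k = 0"
  shows "fam_sum M \<Phi> = \<phi>"
proof (intro ext)
  fix i k
  show "fam_sum M \<Phi> i k = \<phi> i k"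
  proof (cases "i < N \<and> k < N")
    case False
    then have "fam_sum M \<Phi> i k = 0" "\<phi> i k = 0"
      using herm_imp_supported[OF herm_fam_sum, of \<Phi>] herm_imp_supported[OF S_herm[OF assms(2)]]
        assms(1) C_sub unfolding supported_def by (auto simp: not_less)
    then show ?thesis by simp
  qed (use assms(3) in auto)
qed

lemma penalty_minimizer:
  assumes value_lt: "\<And>\<Phi>. primal_feasible \<Phi> \<Longrightarrow> objective \<Phi> < r"
  obtains \<Phi>0 \<phi>0 where "\<Phi>0 \<in> slice" "\<phi>0 \<in> Sset" "0 < pair_penalty r \<Phi>0 \<phi>0"
    "\<And>\<Phi> \<phi>. \<Phi> \<in> slice \<Longrightarrow> \<phi> \<in> Sset \<Longrightarrow> pair_penalty r \<Phi>0 \<phi>0 \<le> pair_penalty r \<Phi> \<phi>"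
proof -
  have "slice \<times> Sset \<noteq> {}"
    using feasible feasible_in_slice by blast
  then obtain x0 where x0: "x0 \<in> slice \<times> Sset"
    and min: "\<And>y. y \<in> slice \<times> Sset \<Longrightarrow> pair_penalty r (fst x0) (snd x0) \<le> pair_penalty r (fst y) (snd y)"
    using continuous_attains_inf[OF compact_Times[OF compact_slice S_compact] _ continuous_on_pair_penalty]
    by blast
  have "pair_penalty r (fst x0) (snd x0) \<noteq> 0"
  proof
    assume "pair_penalty r (fst x0) (snd x0) = 0"
    then have "fam_sum M (fst x0) = snd x0" "\<forall>j<J. constraint j (fst x0) \<le> 0" "r \<le> objective (fst x0)"
      using x0 fam_sum_eq_if_entries_eq[of "fst x0" "snd x0"]
      unfolding pair_penalty_def penalty_eq_0_iff slice_def by auto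
    then show False
      using value_lt[of "fst x0"] x0 by (auto simp: primal_feasible_def slice_def)
  qed
  then have "0 < pair_penalty r (fst x0) (snd x0)"
    using penalty_nonneg unfolding pair_penalty_def by (simp add: order_less_le)
  moreover have "pair_penalty r (fst x0) (snd x0) \<le> pair_penalty r \<Phi> \<phi>"
    if "\<Phi> \<in> slice" "\<phi> \<in> Sset" for \<Phi> \<phi>
    using min[of "(\<Phi>, \<phi>)"] that by simp
  ultimately show ?thesis
    using that[of "fst x0" "snd x0"] x0 by (simp add: mem_Times_iff)
qed

lemma pair_penalty_segment:
  "pair_penalty r (\<lambda>m i k. \<Phi>0 m i k + of_real s * (\<Phi> m i k - \<Phi>0 m i k))
       (\<lambda>i k. \<phi>0 i k + of_real s * (\<phi> i k - \<phi>0 i k))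
   = penalty N J r
       (\<lambda>i k. (fam_sum M \<Phi>0 i k - \<phi>0 i k)
          + of_real s * ((fam_sum M \<Phi> i k - \<phi> i k) - (fam_sum M \<Phi>0 i k - \<phi>0 i k)))
       (\<lambda>j. constraint j \<Phi>0 + s * (constraint j \<Phi> - constraint j \<Phi>0))
       (objective \<Phi>0 + s * (objective \<Phi> - objective \<Phi>0))"
proof -
  have "fam_sum M (\<lambda>m i k. \<Phi>0 m i k + of_real s * (\<Phi> m i k - \<Phi>0 m i k)) i k
      = fam_sum M \<Phi>0 i k + of_real s * (fam_sum M \<Phi> i k - fam_sum M \<Phi>0 i k)" for i k
    by (simp add: fam_sum_def sum.distrib sum_distrib_left sum_subtractf right_diff_distrib)
  then show ?thesis
    unfolding pair_penalty_def constraint_def objective_def fam_inner_segment_left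
    by (simp only:) (simp add: algebra_simps)
qed

lemma penalty_minimizer_variational_inequality:
  assumes \<Phi>0: "\<Phi>0 \<in> slice" and \<phi>0: "\<phi>0 \<in> Sset"
    and min: "\<And>\<Phi> \<phi>. \<Phi> \<in> slice \<Longrightarrow> \<phi> \<in> Sset \<Longrightarrow> pair_penalty r \<Phi>0 \<phi>0 \<le> pair_penalty r \<Phi> \<phi>"
    and \<Phi>: "\<Phi> \<in> slice" and \<phi>: "\<phi> \<in> Sset"
  defines "U0 \<equiv> \<lambda>i k. fam_sum M \<Phi>0 i k - \<phi>0 i k" and "\<mu> \<equiv> max 0 (r - objective \<Phi>0)"
  shows "pair_penalty r \<Phi>0 \<phi>0 - \<mu> * r
    \<le> hs_inner N (fam_sum M \<Phi>) U0 - hs_inner N \<phi> U0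
       + (\<Sum>j<J. max 0 (constraint j \<Phi>0) * constraint j \<Phi>) - \<mu> * objective \<Phi>"
proof -
  define lam where "lam j = max 0 (constraint j \<Phi>0)" for j
  have U0_herm: "herm N U0"
    unfolding U0_def using \<Phi>0 C_sub by (auto intro: herm_diff herm_fam_sum S_herm[OF \<phi>0] simp: slice_def)
  have "0 \<le> (\<Sum>i<N. \<Sum>k<N. Re (cnj (U0 i k) * ((fam_sum M \<Phi> i k - \<phi> i k) - U0 i k)))
      + (\<Sum>j<J. lam j * (constraint j \<Phi> - constraint j \<Phi>0)) - \<mu> * (objective \<Phi> - objective \<Phi>0)"
    unfolding U0_def lam_def \<mu>_def
  proof (rule penalty_directional_derivative_nonneg, goal_cases)
    case (1 s)
    have "pair_penalty r \<Phi>0 \<phi>0 \<le> pair_penalty r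
        (\<lambda>m i k. \<Phi>0 m i k + of_real s * (\<Phi> m i k - \<Phi>0 m i k))
        (\<lambda>i k. \<phi>0 i k + of_real s * (\<phi> i k - \<phi>0 i k))"
      by (rule min[OF slice_segment[OF \<Phi>0 \<Phi>] S_segment[OF \<phi>0 \<phi>]]) (use 1 in auto)
    then show ?case
      unfolding pair_penalty_segment by (simp only: pair_penalty_def)
  qed
  moreover have "(\<Sum>i<N. \<Sum>k<N. Re (cnj (U0 i k) * ((fam_sum M \<Phi> i k - \<phi> i k) - U0 i k)))
      = hs_inner N (fam_sum M \<Phi>) U0 - hs_inner N \<phi> U0 - (\<Sum>i<N. \<Sum>k<N. (cmod (U0 i k))\<^sup>2)"
  proof -
    have "(\<Sum>i<N. \<Sum>k<N. Re (cnj (U0 i k) * ((fam_sum M \<Phi> i k - \<phi> i k) - U0 i k)))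
        = hs_inner N (\<lambda>i k. (fam_sum M \<Phi> i k - \<phi> i k) - U0 i k) U0"
      by (rule hs_inner_herm_right[OF U0_herm, symmetric])
    then show ?thesis
      by (simp only: hs_inner_diff_left hs_inner_self[OF U0_herm])
  qed
  moreover have "lam j * (constraint j \<Phi> - constraint j \<Phi>0) = lam j * constraint j \<Phi> - (lam j)\<^sup>2" for j
    by (simp add: lam_def max_def power2_eq_square right_diff_distrib)
  moreover have "\<mu> * (objective \<Phi> - objective \<Phi>0) = \<mu> * objective \<Phi> - \<mu> * r + \<mu>\<^sup>2"
    by (simp add: \<mu>_def max_def power2_eq_square algebra_simps)
  moreover have "pair_penalty r \<Phi>0 \<phi>0 = (\<Sum>i<N. \<Sum>k<N. (cmod (U0 i k))\<^sup>2) + (\<Sum>j<J. (lam j)\<^sup>2) + \<mu>\<^sup>2"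
    by (simp add: pair_penalty_def penalty_def U0_def lam_def \<mu>_def)
  ultimately show ?thesis
    by (simp add: sum_subtractf lam_def)
qed

lemma fam_inner_lagrangian_cost:
  "fam_inner N M \<Phi> (lagrangian_cost q) = objective \<Phi> - (\<Sum>j<J. q j * fam_inner N M \<Phi> (a j))"
proof -
  have "lagrangian_cost q = (\<lambda>m i k. c m i k - (\<Sum>j<J. of_real (q j) * a j m i k))"
    by (intro ext) (simp add: lagrangian_cost_def)
  then show ?thesis
    by (simp add: fam_inner_combination_right objective_def)
qed

lemma separating_multipliers:
  assumes value_lt: "\<And>\<Phi>. primal_feasible \<Phi> \<Longrightarrow> objective \<Phi> < r"
  obtains chi1 q where "herm N chi1" "\<forall>j<J. 0 \<le> q j" "\<forall>j\<ge>J. q j = 0"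
    "\<And>\<Phi> \<phi>. \<Phi> \<in> slice \<Longrightarrow> \<phi> \<in> Sset \<Longrightarrow> hs_inner N \<phi> chi1 + (\<Sum>j<J. q j * b j) - r
       \<le> hs_inner N (fam_sum M \<Phi>) chi1 - fam_inner N M \<Phi> (lagrangian_cost q)"
proof -
  obtain \<Phi>0 \<phi>0 where \<Phi>0: "\<Phi>0 \<in> slice" and \<phi>0: "\<phi>0 \<in> Sset"
    and pos: "0 < pair_penalty r \<Phi>0 \<phi>0"
    and min: "\<And>\<Phi> \<phi>. \<Phi> \<in> slice \<Longrightarrow> \<phi> \<in> Sset \<Longrightarrow> pair_penalty r \<Phi>0 \<phi>0 \<le> pair_penalty r \<Phi> \<phi>"
    using penalty_minimizer[OF value_lt] by blast
  define U0 where "U0 = (\<lambda>i k. fam_sum M \<Phi>0 i k - \<phi>0 i k)"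
  define \<mu> where "\<mu> = max 0 (r - objective \<Phi>0)"
  obtain B where B: "\<And>\<Phi>. \<Phi> \<in> slice \<Longrightarrow> objective \<Phi> \<le> B"
    using continuous_attains_sup[OF compact_slice _ continuous_on_fam_inner[OF continuous_on_id]] \<Phi>0
    unfolding objective_def by blast
  obtain \<kappa> where \<kappa>: "0 \<le> \<kappa>"
    and scaled: "\<And>\<Phi>. \<Phi> \<in> slice \<Longrightarrow> 0 \<le> \<kappa> * pair_penalty r \<Phi>0 \<phi>0 + (\<kappa> * \<mu> - 1) * (objective \<Phi> - r)"
    using exists_multiplier_scaling[where A = slice and p = objective, OF pos _ B] unfolding \<mu>_def by (metis max.cobounded1)
  define q where "q j = (if j < J then \<kappa> * max 0 (constraint j \<Phi>0) else 0)" for j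
  show ?thesis
  proof (rule that[of "\<lambda>i k. of_real \<kappa> * U0 i k" q])
    show "herm N (\<lambda>i k. of_real \<kappa> * U0 i k)"
      unfolding U0_def using \<Phi>0 C_sub
      by (auto intro!: herm_scale herm_diff herm_fam_sum S_herm[OF \<phi>0] simp: slice_def)
    show "\<forall>j<J. 0 \<le> q j" "\<forall>j\<ge>J. q j = 0"
      using \<kappa> by (simp_all add: q_def)
    fix \<Phi> \<phi> assume \<Phi>: "\<Phi> \<in> slice" and \<phi>: "\<phi> \<in> Sset"
    have "\<kappa> * (pair_penalty r \<Phi>0 \<phi>0 - \<mu> * r)
        \<le> \<kappa> * (hs_inner N (fam_sum M \<Phi>) U0 - hs_inner N \<phi> U0
            + (\<Sum>j<J. max 0 (constraint j \<Phi>0) * constraint j \<Phi>) - \<mu> * objective \<Phi>)"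
      using penalty_minimizer_variational_inequality[OF \<Phi>0 \<phi>0 min \<Phi> \<phi>] \<kappa>
      unfolding U0_def \<mu>_def by (rule mult_left_mono)
    moreover have "(\<Sum>j<J. q j * b j) - (\<Sum>j<J. q j * fam_inner N M \<Phi> (a j))
        = - \<kappa> * (\<Sum>j<J. max 0 (constraint j \<Phi>0) * constraint j \<Phi>)"
      by (simp add: q_def constraint_def sum_distrib_left sum_subtractf[symmetric] algebra_simps)
    ultimately show "hs_inner N \<phi> (\<lambda>i k. of_real \<kappa> * U0 i k) + (\<Sum>j<J. q j * b j) - r
        \<le> hs_inner N (fam_sum M \<Phi>) (\<lambda>i k. of_real \<kappa> * U0 i k) - fam_inner N M \<Phi> (lagrangian_cost q)"
      using scaled[OF \<Phi>]
      by (simp add: hs_inner_scale_right fam_inner_lagrangian_cost algebra_simps)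
  qed
qed

lemma fam_inner_nonneg_if_nonneg_on_slice:
  assumes slice_nonneg: "\<And>\<Phi>. \<Phi> \<in> slice \<Longrightarrow> 0 \<le> fam_inner N M \<Phi> Y" and \<Phi>: "\<Phi> \<in> Cset"
  shows "0 \<le> fam_inner N M \<Phi> Y"
proof -
  define t where "t = Re (trace N (fam_sum M \<Phi>))"
  have \<Phi>_C_G: "\<Phi> \<in> C_G N M" using \<Phi> C_sub by blast
  show ?thesis
  proof (cases "t = 0")
    case True
    then have "\<Phi> m i k = 0" for m i k
      using C_G_entry_le_trace[OF \<Phi>_C_G, of m i k] unfolding t_def by simp
    then show ?thesis by (simp add: fam_inner_vanishing)
  next
    case False
    then have t: "0 < t"
      using C_G_trace_nonneg[OF \<Phi>_C_G] unfolding t_def by simp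
    define \<Psi> where "\<Psi> = (\<lambda>m i k. of_real (c0 / t) * \<Phi> m i k)"
    have "0 \<le> c0 / t"
      using t c0_pos by simp
    then have "\<Psi> \<in> Cset"
      using C_cone \<Phi> unfolding convex_cone_fams_def \<Psi>_def by blast
    moreover have "Re (trace N (fam_sum M \<Psi>)) = c0"
      using t unfolding Re_trace_fam_sum_eq_fam_inner \<Psi>_def fam_inner_scale_left
      by (simp add: t_def Re_trace_fam_sum_eq_fam_inner)
    ultimately have "0 \<le> fam_inner N M \<Psi> Y"
      by (intro slice_nonneg) (simp add: slice_def)
    then show ?thesis
      using t c0_pos unfolding \<Psi>_def fam_inner_scale_left
      by (simp add: zero_le_divide_iff zero_le_mult_iff)
  qed
qed

lemma fam_inner_dual_slack:
  "fam_inner N M \<Phi> (dual_slack chi q) = hs_inner N (fam_sum M \<Phi>) chi - fam_inner N M \<Phi> (lagrangian_cost q)"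
  unfolding dual_slack_def by (rule fam_inner_shifted_right)

text \<open>Shifting \<open>chi1\<close> by a multiple of the identity changes \<open>\<langle>\<Phi>, \<cdot>\<rangle>\<close> by a constant on the slice,
  which absorbs the gap in the separation inequality.\<close>
lemma dual_point_of_separation:
  assumes chi1: "herm N chi1" and q: "\<forall>j<J. 0 \<le> q j" "\<forall>j\<ge>J. q j = 0"
    and sep: "\<And>\<Phi> \<phi>. \<Phi> \<in> slice \<Longrightarrow> \<phi> \<in> Sset \<Longrightarrow> hs_inner N \<phi> chi1 + (\<Sum>j<J. q j * b j) - r
       \<le> hs_inner N (fam_sum M \<Phi>) chi1 - fam_inner N M \<Phi> (lagrangian_cost q)"
  shows "\<exists>chi. dual_feasible chi q \<and> dual_value chi q \<le> ereal r"
proof -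
  define B where "B \<Phi> = hs_inner N (fam_sum M \<Phi>) chi1 - fam_inner N M \<Phi> (lagrangian_cost q)" for \<Phi>
  define \<alpha> where "\<alpha> = Inf (B ` slice)"
  define chi where "chi = (\<lambda>i k. chi1 i k - of_real (\<alpha> / c0) * ident N i k)"
  obtain \<Phi>1 \<phi>1 where \<Phi>1: "\<Phi>1 \<in> slice" and \<phi>1: "\<phi>1 \<in> Sset"
    using feasible feasible_in_slice by blast
  have bdd: "bdd_below (B ` slice)"
    using sep[OF _ \<phi>1] unfolding B_def by (auto intro!: bdd_belowI)
  have hs_chi: "hs_inner N X chi = hs_inner N X chi1 - (\<alpha> / c0) * Re (trace N X)" for X
    unfolding chi_def hs_inner_diff_right hs_inner_scale_right hs_inner_ident_right ..
  have herm_chi: "herm N chi"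
    unfolding chi_def by (intro herm_diff chi1 herm_scale herm_ident)
  have "herm N (lagrangian_cost q m)" if "m < M" for m
    unfolding lagrangian_cost_def using that
    by (intro herm_diff herm_sum herm_scale) (auto intro: c_herm a_herm)
  then have "dual_slack chi q \<in> Her_fam N M"
    unfolding Her_fam_def famsupp_def dual_slack_def by (auto intro: herm_diff herm_chi)
  moreover have "0 \<le> fam_inner N M \<Phi> (dual_slack chi q)" if "\<Phi> \<in> Cset" for \<Phi>
  proof (rule fam_inner_nonneg_if_nonneg_on_slice[OF _ that])
    fix \<Psi> assume "\<Psi> \<in> slice"
    then show "0 \<le> fam_inner N M \<Psi> (dual_slack chi q)"
      using cInf_lower[OF imageI bdd, of \<Psi>] c0_pos
      by (simp add: fam_inner_dual_slack hs_chi slice_def B_def \<alpha>_def)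
  qed
  moreover have "hs_inner N \<phi> chi \<le> r - (\<Sum>j<J. q j * b j)" if "\<phi> \<in> Sset" for \<phi>
  proof -
    have "hs_inner N \<phi> chi1 + (\<Sum>j<J. q j * b j) - r \<le> \<alpha>"
      unfolding \<alpha>_def using \<Phi>1 sep[OF _ that] by (auto simp: B_def intro!: cInf_greatest)
    then show ?thesis
      using S_trace[OF that] c0_pos by (simp add: hs_chi)
  qed
  then have "(SUP \<phi>\<in>Sset. ereal (hs_inner N \<phi> chi)) + ereal (\<Sum>j<J. q j * b j)
      \<le> ereal (r - (\<Sum>j<J. q j * b j)) + ereal (\<Sum>j<J. q j * b j)"
    by (intro add_right_mono SUP_least) simp
  ultimately show ?thesis
    using herm_chi q unfolding dual_feasible_def dual_cone_def dual_value_def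
    by (intro exI[of _ chi]) simp
qed

lemma dual_value_le_of_primal_bound:
  assumes "\<And>\<Phi>. primal_feasible \<Phi> \<Longrightarrow> objective \<Phi> < r"
  shows "\<exists>chi q. dual_feasible chi q \<and> dual_value chi q \<le> ereal r"
proof -
  obtain chi1 q where "herm N chi1" "\<forall>j<J. 0 \<le> q j" "\<forall>j\<ge>J. q j = 0"
    "\<And>\<Phi> \<phi>. \<Phi> \<in> slice \<Longrightarrow> \<phi> \<in> Sset \<Longrightarrow> hs_inner N \<phi> chi1 + (\<Sum>j<J. q j * b j) - r
       \<le> hs_inner N (fam_sum M \<Phi>) chi1 - fam_inner N M \<Phi> (lagrangian_cost q)"
    using separating_multipliers[OF assms] by blast
  then show ?thesis
    using dual_point_of_separation by blast
qed

lemma weak_duality: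
  assumes "primal_feasible \<Phi>" and dual: "dual_feasible chi q"
  shows "ereal (objective \<Phi>) \<le> dual_value chi q"
proof -
  have \<Phi>: "\<Phi> \<in> Cset" "fam_sum M \<Phi> \<in> Sset" "\<forall>j<J. constraint j \<Phi> \<le> 0"
    using assms(1) unfolding primal_feasible_def by auto
  have "0 \<le> fam_inner N M \<Phi> (dual_slack chi q)"
    using dual \<Phi> unfolding dual_feasible_def dual_cone_def by blast
  then have "objective \<Phi> \<le> hs_inner N (fam_sum M \<Phi>) chi + (\<Sum>j<J. q j * fam_inner N M \<Phi> (a j))"
    by (simp add: fam_inner_dual_slack fam_inner_lagrangian_cost)
  also have "(\<Sum>j<J. q j * fam_inner N M \<Phi> (a j)) \<le> (\<Sum>j<J. q j * b j)"
    using \<Phi>(3) dual unfolding dual_feasible_def constraint_def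
    by (intro sum_mono mult_left_mono) (simp_all add: algebra_simps)
  finally have "ereal (objective \<Phi>) \<le> ereal (hs_inner N (fam_sum M \<Phi>) chi) + ereal (\<Sum>j<J. q j * b j)"
    by simp
  also have "\<dots> \<le> dual_value chi q"
    unfolding dual_value_def using \<Phi>(2) by (intro add_right_mono SUP_upper)
  finally show ?thesis .
qed

end

lemma continuous_lt_on_closure_if_SUP_lt:
  fixes f :: "'a::metric_space \<Rightarrow> real"
  assumes "continuous_on (closure A) f" "(SUP x\<in>A. ereal (f x)) < ereal r" "x \<in> closure A"
  shows "f x < r"
proof -
  obtain r0 where r0: "(SUP x\<in>A. ereal (f x)) < ereal r0" "r0 < r"
    using assms(2) ereal_dense2 by fastforce
  have "f x \<le> r0"
  proof (rule continuous_le_on_closure[OF assms(1,3)])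
    show "f y \<le> r0" if "y \<in> A" for y
      using order.strict_trans1[OF SUP_upper[OF that] r0(1)] by simp
  qed
  then show ?thesis using r0(2) by simp
qed

lemma SUP_eq_INF_if_no_gap:
  fixes f :: "'a \<Rightarrow> ereal" and g :: "'b \<Rightarrow> ereal"
  assumes weak: "\<And>x y. x \<in> A \<Longrightarrow> y \<in> B \<Longrightarrow> f x \<le> g y"
    and approx: "\<And>r. (SUP x\<in>A. f x) < ereal r \<Longrightarrow> \<exists>y\<in>B. g y \<le> ereal r"
  shows "(SUP x\<in>A. f x) = (INF y\<in>B. g y)"
proof (rule antisym)
  show "(SUP x\<in>A. f x) \<le> (INF y\<in>B. g y)"
    using weak by (auto intro!: SUP_least INF_greatest)
  show "(INF y\<in>B. g y) \<le> (SUP x\<in>A. f x)"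
  proof (rule dense_ge)
    fix z assume z: "(SUP x\<in>A. f x) < z"
    show "(INF y\<in>B. g y) \<le> z"
    proof (cases z)
      case (real r)
      then obtain y where "y \<in> B" "g y \<le> z"
        using approx z by blast
      then show ?thesis
        by (meson INF_lower order_trans)
    qed (use z in simp_all)
  qed
qed

section \<open>The tester program\<close>

text \<open>The locale predicate has no argument \<open>b\<close>, which occurs in none of its assumptions.\<close>
lemma conic_program_testers:
  assumes T: "1 \<le> T" and dims_pos: "\<forall>t\<in>{1..T}. 0 < v t \<and> 0 < w t"
    and c_herm: "\<forall>m<M. herm (dimH v w T) (c m)"
    and a_herm: "\<forall>j<J. \<forall>m<M. herm (dimH v w T) (a j m)"
    and C: "Cset \<subseteq> C_G (dimH v w T) M" "closed Cset" "convex_cone_fams Cset"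
    and S: "Sset \<subseteq> S_G T v w" "closed Sset" "convex_ops Sset"
    and feasible: "\<exists>\<Phi>\<in>Cset. fam_sum M \<Phi> \<in> Sset"
  shows "conic_program (dimH v w T) M J c a Cset Sset (\<Prod>t\<in>{1..T}. w t)"
proof
  have "Sset \<subseteq> {\<phi>. \<forall>i j. cmod (\<phi> i j) \<le> real (\<Prod>t\<in>{1..<T}. w t)}"
    using S_G_trace_herm_bounded(3)[OF _ T] S(1) by blast
  then show "compact Sset"
    using compact_Int_closed[OF compact_entry_bounded S(2), of "real (\<Prod>t\<in>{1..<T}. w t)"]
    by (simp only: Int_absorb1)
  show "0 < real (\<Prod>t\<in>{1..T}. w t)"
    using dims_pos by (simp add: prod_pos del: of_nat_prod)
  fix \<phi> assume "\<phi> \<in> Sset"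
  then show "herm (dimH v w T) \<phi>" "Re (trace (dimH v w T) \<phi>) = real (\<Prod>t\<in>{1..T}. w t)"
    using S_G_trace_herm_bounded(1,2)[OF _ T] S(1) by (auto simp del: of_nat_prod)
qed (use assms in auto)

theorem theorem1:
  fixes T M J :: nat
    and v w :: "nat \<Rightarrow> nat"
    and c :: "nat \<Rightarrow> op" and a :: "nat \<Rightarrow> nat \<Rightarrow> op" and b :: "nat \<Rightarrow> real"
    and Tset Cset :: "(nat \<Rightarrow> op) set" and Sset :: "op set"
  defines "N \<equiv> dimH v w T"
  defines "\<eta> \<equiv> (\<lambda>j \<Phi>. fam_inner N M \<Phi> (\<lambda>m. a j m) - b j)"
  defines "P \<equiv> (\<lambda>\<Phi>. fam_inner N M \<Phi> c)"
  defines "Pset \<equiv> {\<Phi> \<in> Tset. \<forall>j<J. \<eta> j \<Phi> \<le> 0}"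
  defines "z \<equiv> (\<lambda>(q::nat \<Rightarrow> real) m. (\<lambda>i k. c m i k - (\<Sum>j<J. of_real (q j) * a j m i k)))"
  defines "Dset \<equiv> {(chi, q). herm N chi \<and> (\<forall>j<J. 0 \<le> q j) \<and> (\<forall>j\<ge>J. q j = 0) \<and>
                   (\<lambda>m. if m < M then (\<lambda>i k. chi i k - z q m i k) else (\<lambda>i k. 0))
                      \<in> dual_cone N M Cset}"
  defines "D \<equiv> (\<lambda>(chi, q). (SUP \<phi>\<in>Sset. ereal (hs_inner N \<phi> chi)) + ereal (\<Sum>j<J. q j * b j))"
  assumes T_pos: "1 \<le> T" and M_ge: "2 \<le> M"
    and dims_pos: "\<forall>t\<in>{1..T}. 0 < v t \<and> 0 < w t"
    and c_herm: "\<forall>m<M. herm N (c m)"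
    and a_herm: "\<forall>j<J. \<forall>m<M. herm N (a j m)"
    and T_ne: "Tset \<noteq> {}" and T_conv: "convex_fams Tset" and T_sub: "Tset \<subseteq> T_G T v w M"
    and P_closure: "closure Pset = {\<Phi> \<in> closure Tset. \<forall>j<J. \<eta> j \<Phi> \<le> 0}"
    and C_sub: "Cset \<subseteq> C_G N M" and C_closed: "closed Cset" and C_cone: "convex_cone_fams Cset"
    and S_sub: "Sset \<subseteq> S_G T v w" and S_closed: "closed Sset" and S_conv: "convex_ops Sset"
    and T_closure: "closure Tset = {\<Phi> \<in> Cset. fam_sum M \<Phi> \<in> Sset}"
  shows "(SUP \<Phi>\<in>Pset. ereal (P \<Phi>)) = (INF d\<in>Dset. D d)"
proof -
  interpret conic_program N M J c a b Cset Sset "\<Prod>t\<in>{1..T}. w t"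
    unfolding N_def
    by (rule conic_program_testers) (use assms[unfolded N_def] closure_subset in blast)+
  have P_eq: "P = objective" and \<eta>_eq: "\<eta> = constraint"
    by (intro ext; simp add: P_def objective_def \<eta>_def constraint_def)+
  have "z = lagrangian_cost"
    by (intro ext) (simp add: z_def lagrangian_cost_def)
  then have D_eq: "Dset = {(chi, q). dual_feasible chi q}" "D = (\<lambda>(chi, q). dual_value chi q)"
    by (auto simp: Dset_def dual_feasible_def dual_slack_def D_def dual_value_def)
  have P_closure_feasible: "closure Pset = Collect primal_feasible"
    using P_closure T_closure by (auto simp: \<eta>_eq primal_feasible_def)
  show ?thesis
    unfolding D_eq P_eq
  proof (rule SUP_eq_INF_if_no_gap, clarsimp)
    fix \<Phi> chi q assume "\<Phi> \<in> Pset" "dual_feasible chi q"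
    then show "ereal (objective \<Phi>) \<le> dual_value chi q"
      using weak_duality closure_subset P_closure_feasible by blast
  next
    fix r assume "(SUP \<Phi>\<in>Pset. ereal (objective \<Phi>)) < ereal r"
    then have "objective \<Phi> < r" if "primal_feasible \<Phi>" for \<Phi>
      using continuous_lt_on_closure_if_SUP_lt[OF continuous_on_fam_inner[OF continuous_on_id],
          where A = Pset] that
      by (simp add: P_closure_feasible objective_def)
    then show "\<exists>d\<in>{(chi, q). dual_feasible chi q}. (case d of (chi, q) \<Rightarrow> dual_value chi q) \<le> ereal r"
      using dual_value_le_of_primal_bound by auto
  qed
qed

end
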